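(* Let $M=2^\lambda$, let $\mathcal{S}$ be the $M$-PSK signal set with labelling $\mu(m)=e^{j(2m+1)\pi/M}$, and let $n\ge1$. Let $X$ be the bit-wise XOR map on $\mathbb{Z}_M^n\times\mathbb{Z}_M^n$, $X(u,v)=(u_1\oplus v_1,\dots,u_n\oplus v_n)$, where $\oplus$ is the bitwise XOR of the $\lambda$-bit binary representations. Then $X$ is a Latin square for the $n\times n$ system, and for every nonzero $\Delta x=[\Delta x_A^T\;\Delta x_B^T]^T\in\Delta\mathcal{S}^{2n}$ such that for each $1\le i\le n$ either $\Delta x_{A,i}=\Delta x_{B,i}$ or $\Delta x_{A,i}=-\Delta x_{B,i}$, the map $X$ removes $[\mathrm{span}(\Delta x)]^{\perp}$.
   Context: $M$-PSK signal set: $\mathcal{S}=\{e^{j(2m+1)\pi/M}: m\in\mathbb{Z}_M\}$, labelled by $\mu(m)=e^{j(2m+1)\pi/M}$; for $u\in\mathbb{Z}_M^n$, $\mu(u)=(\mu(u_1),\dots,\mu(u_n))^T$. $\Delta\mathcal{S}=\{s-s':s,s'\in\mathcal{S}\}$. For $V\subseteq\mathbb{C}^N$, $V^\perp=\{y:y^Tv=0\ \forall v\in V\}$. A Latin square for the $n\times n$ system is a map $L:\mathbb{Z}_M^{n}\times\mathbb{Z}_M^{n}\to\Sigma$ with no symbol repeated in any row or column. For nonzero $w\in\mathbb{C}^{2n}$, $L$ removes $[\mathrm{span}(w)]^\perp$ if $L(u,v)=L(u',v')$ whenever $[\mu(u)^T-\mu(u')^T\;\;\mu(v)^T-\mu(v')^T]^T\in\mathrm{span}(w)\setminus\{0\}$.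 *)

theory Defs
  imports Complex_Main
begin

text \<open>Vectors in Z_M^n are functions from a finite index type 'n (with CARD('n) = n)
  to nat, with all entries below M.\<close>

definition ZMn :: "nat \<Rightarrow> ('n::finite \<Rightarrow> nat) set" where
  "ZMn M = {u. \<forall>i. u i < M}"

definition mu :: "nat \<Rightarrow> nat \<Rightarrow> complex" where
  "mu M m = cis ((2 * real m + 1) * pi / real M)"

definition PSK :: "nat \<Rightarrow> complex set" where
  "PSK M = {mu M m | m. m < M}"

definition DeltaS :: "nat \<Rightarrow> complex set" where
  "DeltaS M = {s - s' | s s'. s \<in> PSK M \<and> s' \<in> PSK M}"

definition latin_square :: "nat \<Rightarrow> (('n::finite \<Rightarrow> nat) \<Rightarrow> ('n \<Rightarrow> nat) \<Rightarrow> 's) \<Rightarrow> bool" where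
  "latin_square M L \<longleftrightarrow>
     (\<forall>u \<in> ZMn M. inj_on (\<lambda>v. L u v) (ZMn M)) \<and>
     (\<forall>v \<in> ZMn M. inj_on (\<lambda>u. L u v) (ZMn M))"

text \<open>L removes [span(w)]^perp, where w = [wA^T wB^T]^T: whenever the difference vector
  [mu(u)-mu(u'); mu(v)-mu(v')] lies in span(w) minus 0, L(u,v) = L(u',v').\<close>
definition removes ::
  "nat \<Rightarrow> (('n::finite \<Rightarrow> nat) \<Rightarrow> ('n \<Rightarrow> nat) \<Rightarrow> 's) \<Rightarrow> ('n \<Rightarrow> complex) \<Rightarrow> ('n \<Rightarrow> complex) \<Rightarrow> bool" where
  "removes M L wA wB \<longleftrightarrow>
     (\<forall>u \<in> ZMn M. \<forall>u' \<in> ZMn M. \<forall>v \<in> ZMn M. \<forall>v' \<in> ZMn M.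
        (\<exists>c::complex. (\<forall>i. mu M (u i) - mu M (u' i) = c * wA i) \<and>
                      (\<forall>i. mu M (v i) - mu M (v' i) = c * wB i)) \<and>
        (\<exists>i. mu M (u i) - mu M (u' i) \<noteq> 0 \<or> mu M (v i) - mu M (v' i) \<noteq> 0)
        \<longrightarrow> L u v = L u' v')"

definition xor_map :: "('n \<Rightarrow> nat) \<Rightarrow> ('n \<Rightarrow> nat) \<Rightarrow> ('n \<Rightarrow> nat)" where
  "xor_map u v = (\<lambda>i. xor (u i) (v i))"

end

theory Submission imports Defs begin

(* Write M = 2^lam and s_a = mu M a for the PSK point with label a.
   If a difference vector [mu(u) - mu(u'); mu(v) - mu(v')] is a multiple of
   [dA; dB] with dA_i = +-dB_i, then in every coordinate
   s_{u_i} - s_{u'_i} = +-(s_{v_i} - s_{v'_i}), i.e. an equation s_a + s_d = s_b + s_c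
   between sums of two unit-circle points.  A nonzero sum of two unit complex
   numbers determines the pair (via the product, which equals s / cnj s), so either
   the labels agree up to swapping, or both sums vanish, i.e. both pairs are
   antipodal.  Antipodal PSK labels differ exactly in the top bit, so flipping
   that bit is an XOR with 2^(lam-1).  In every case u_i XOR v_i = u'_i XOR v'_i. *)

lemma xor_left_self_nat [simp]: "xor (a::nat) (xor a x) = x"
  by (simp add: xor.assoc [symmetric])

lemma xor_top_bit:
  assumes "(a::nat) < 2 ^ Suc k"
  shows "xor a (2 ^ k) = (if a < 2 ^ k then a + 2 ^ k else a - 2 ^ k)"
proof -
  have low: "xor b (2 ^ k) = b + 2 ^ k" if "(b::nat) < 2 ^ k" for b
  proof -
    have "and b (2 ^ k) = 0"
      by (metis that and_exp_eq_0_iff_not_bit bit_take_bit_iff less_irrefl take_bit_nat_eq_self)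
    then show ?thesis by (simp add: disjunctive_add_eq_xor)
  qed
  show ?thesis
  proof (cases "a < 2 ^ k")
    case False
    then have "a - 2 ^ k < 2 ^ k" and "a = (a - 2 ^ k) + 2 ^ k" using assms by auto
    then have "xor a (2 ^ k) = xor (xor (a - 2 ^ k) (2 ^ k)) (2 ^ k)" using low by metis
    then show ?thesis using False by (simp add: xor.assoc)
  qed (simp add: low)
qed

lemma xor_top_bit_less:
  "(a::nat) < 2 ^ Suc k \<Longrightarrow> xor a (2 ^ k) < 2 ^ Suc k"
  by (auto simp: xor_top_bit)

lemma norm_mu [simp]: "norm (mu M a) = 1"
  by (simp add: mu_def)

lemma mu_add_half:
  assumes "0 < h"
  shows "mu (2 * h) (a + h) = - mu (2 * h) a"
proof -
  have "(2 * real (a + h) + 1) * pi / real (2 * h) = (2 * real a + 1) * pi / real (2 * h) + pi"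
    using assms by (simp add: field_simps)
  then show ?thesis by (simp add: mu_def minus_cis)
qed

lemma mu_xor_top_bit:
  assumes "a < 2 ^ Suc k"
  shows "mu (2 ^ Suc k) (xor a (2 ^ k)) = - mu (2 ^ Suc k) a"
proof (cases "a < 2 ^ k")
  case True
  then show ?thesis using mu_add_half[of "2 ^ k" a] by (simp add: xor_top_bit[OF assms])
next
  case False
  then have "mu (2 ^ Suc k) a = - mu (2 ^ Suc k) (a - 2 ^ k)"
    using mu_add_half[of "2 ^ k" "a - 2 ^ k"] by simp
  then show ?thesis using False by (simp add: xor_top_bit[OF assms])
qed

lemma cis_inj_interval:
  assumes "cis x = cis y" "0 < x" "x < 2 * pi" "0 < y" "y < 2 * pi"
  shows "x = y"
proof -
  have "cos x = cos y" "sin x = sin y"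
    using arg_cong[OF assms(1), of Re] arg_cong[OF assms(1), of Im] by simp_all
  then obtain n :: int where n: "x = y + 2 * pi * n" using sin_cos_eq_iff by metis
  have "\<bar>2 * pi * n\<bar> < 2 * pi" using n assms by auto
  then have "\<bar>real_of_int n\<bar> < 1" by (simp add: abs_mult)
  then have "n = 0" by linarith
  then show ?thesis using n by simp
qed

lemma mu_inj:
  assumes "a < M" "b < M" "mu M a = mu M b"
  shows "a = b"
proof -
  have M: "real M > 0" using assms by auto
  have angle: "0 < (2 * real m + 1) * pi / real M \<and> (2 * real m + 1) * pi / real M < 2 * pi"
    if "m < M" for m
  proof -
    have "(2 * real m + 1) * pi < 2 * real M * pi" using that by simp
    moreover have "0 < (2 * real m + 1) * pi" by simp
    ultimately show ?thesis using M by (simp add: field_simps)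
  qed
  have "(2 * real a + 1) * pi / real M = (2 * real b + 1) * pi / real M"
    using cis_inj_interval[OF assms(3)[unfolded mu_def]] angle[OF assms(1)] angle[OF assms(2)]
    by blast
  then show ?thesis using M by (simp add: field_simps)
qed

text \<open>A nonzero sum s = x + y of unit complex numbers determines the unordered pair
  {x, y}: their product is s / cnj s, and x, y are the roots of t^2 - s t + s / cnj s.\<close>
lemma unit_product_from_sum:
  fixes x y :: complex
  assumes "norm x = 1" "norm y = 1" "x + y \<noteq> 0"
  shows "x * y = (x + y) / cnj (x + y)"
proof -
  have nz: "u \<noteq> 0" if "norm u = 1" for u :: complex
    using that by auto
  have inv: "cnj u = 1 / u" if "norm u = 1" for u :: complex
  proof -
    have "u * cnj u = 1" using that complex_norm_square[of u] by simp
    then show ?thesis using nz[OF that] by (simp add: field_simps)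
  qed
  have "cnj (x + y) = (x + y) / (x * y)"
    using inv[OF assms(1)] inv[OF assms(2)] nz[OF assms(1)] nz[OF assms(2)]
    by (simp add: field_simps)
  moreover have "cnj (x + y) \<noteq> 0" using assms(3) complex_cnj_zero_iff by blast
  ultimately show ?thesis using nz[OF assms(1)] nz[OF assms(2)] by (auto simp: field_simps)
qed

lemma unit_sum_determines_pair:
  fixes x y z w :: complex
  assumes "norm x = 1" "norm y = 1" "norm z = 1" "norm w = 1"
    and sum: "x + y = z + w" and nonzero: "x + y \<noteq> 0"
  shows "(x = z \<and> y = w) \<or> (x = w \<and> y = z)"
proof -
  have product: "x * y = z * w"
    using unit_product_from_sum[OF assms(1,2) nonzero] unit_product_from_sum[OF assms(3,4)]
      sum nonzero by simp
  have "(z - x) * (z - y) = z * z - (x + y) * z + x * y" by (simp add: algebra_simps)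
  also have "\<dots> = z * z - (z + w) * z + z * w" using sum product by simp
  also have "\<dots> = 0" by (simp add: algebra_simps)
  finally have "(z - x) * (z - y) = 0" .
  then show ?thesis using sum by auto
qed

lemma mu_sum_eq_cases:
  assumes M: "M = 2 ^ lam" and labels: "a < M" "b < M" "c < M" "d < M"
    and sum: "mu M a + mu M c = mu M b + mu M d"
  shows "(a = b \<and> c = d) \<or> (a = d \<and> c = b) \<or>
         (\<exists>k. lam = Suc k \<and> c = xor a (2 ^ k) \<and> d = xor b (2 ^ k))"
proof (cases "mu M a + mu M c = 0")
  case False
  then have "(mu M a = mu M b \<and> mu M c = mu M d) \<or> (mu M a = mu M d \<and> mu M c = mu M b)"
    using unit_sum_determines_pair[OF _ _ _ _ sum] by simp
  then show ?thesis using mu_inj labels by blast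
next
  case antipodal: True
  show ?thesis
  proof (cases lam)
    case 0
    then show ?thesis using labels M by simp
  next
    case (Suc k)
    have "mu M c = mu M (xor a (2 ^ k))" "mu M d = mu M (xor b (2 ^ k))"
      using antipodal sum mu_xor_top_bit[of a k] mu_xor_top_bit[of b k] labels M Suc
      by (simp_all add: add_eq_0_iff)
    then have "c = xor a (2 ^ k)" "d = xor b (2 ^ k)"
      using mu_inj labels xor_top_bit_less[of a k] xor_top_bit_less[of b k] M Suc by auto
    then show ?thesis using Suc by simp
  qed
qed

lemma xor_eq_of_mu_diff:
  assumes M: "M = 2 ^ lam" and labels: "a < M" "b < M" "c < M" "d < M"
    and diff: "mu M a - mu M b = mu M c - mu M d \<or> mu M a - mu M b = - (mu M c - mu M d)"
  shows "xor a c = xor b d"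
  using diff
proof
  assume "mu M a - mu M b = mu M c - mu M d"
  then have "mu M a + mu M d = mu M b + mu M c" by (simp add: algebra_simps)
  from mu_sum_eq_cases[OF M labels(1,2,4,3) this] show ?thesis
    by (auto simp: xor.assoc xor.left_commute xor.commute)
next
  assume "mu M a - mu M b = - (mu M c - mu M d)"
  then have "mu M a + mu M c = mu M b + mu M d" by (simp add: algebra_simps)
  from mu_sum_eq_cases[OF M labels this] show ?thesis
    by (auto simp: xor.assoc xor.left_commute xor.commute)
qed

lemma latin_square_xor_map: "latin_square M (xor_map :: ('n::finite \<Rightarrow> nat) \<Rightarrow> _ \<Rightarrow> _)"
proof -
  have cancel: "xor (u::nat) v = xor u v' \<Longrightarrow> v = v'" for u v v'
    by (metis xor_left_self_nat)
  show ?thesis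
    unfolding latin_square_def inj_on_def xor_map_def
    by (auto intro!: ext dest: fun_cong intro: cancel simp: xor.commute)
qed

lemma removes_xor_map:
  fixes dA dB :: "'n::finite \<Rightarrow> complex"
  assumes signs: "\<forall>i. dA i = dB i \<or> dA i = - dB i"
  shows "removes (2 ^ lam) (xor_map :: ('n \<Rightarrow> nat) \<Rightarrow> _ \<Rightarrow> _) dA dB"
  unfolding removes_def
proof (intro ballI impI)
  let ?mu = "mu (2 ^ lam)"
  fix u u' v v' :: "'n \<Rightarrow> nat"
  assume labels: "u \<in> ZMn (2 ^ lam)" "u' \<in> ZMn (2 ^ lam)" "v \<in> ZMn (2 ^ lam)" "v' \<in> ZMn (2 ^ lam)"
    and "(\<exists>c. (\<forall>i. ?mu (u i) - ?mu (u' i) = c * dA i) \<and> (\<forall>i. ?mu (v i) - ?mu (v' i) = c * dB i))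
         \<and> (\<exists>i. ?mu (u i) - ?mu (u' i) \<noteq> 0 \<or> ?mu (v i) - ?mu (v' i) \<noteq> 0)"
  then obtain c where cA: "\<forall>i. ?mu (u i) - ?mu (u' i) = c * dA i"
    and cB: "\<forall>i. ?mu (v i) - ?mu (v' i) = c * dB i" by blast
  have "xor (u i) (v i) = xor (u' i) (v' i)" for i
  proof -
    have "?mu (u i) - ?mu (u' i) = ?mu (v i) - ?mu (v' i) \<or>
          ?mu (u i) - ?mu (u' i) = - (?mu (v i) - ?mu (v' i))"
      using cA cB signs by (metis mult_minus_right)
    then show ?thesis using xor_eq_of_mu_diff[OF refl] labels unfolding ZMn_def by blast
  qed
  then show "xor_map u v = xor_map u' v'" unfolding xor_map_def by blast
qed

text \<open>Only the sign condition on the coordinates of the difference vector is needed.\<close>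
theorem lemma5:
  fixes lam :: nat and dA dB :: "'n::finite \<Rightarrow> complex"
  assumes "\<forall>i. dA i \<in> DeltaS (2 ^ lam) \<and> dB i \<in> DeltaS (2 ^ lam)"
    and "\<exists>i. dA i \<noteq> 0 \<or> dB i \<noteq> 0"
    and "\<forall>i. dA i = dB i \<or> dA i = - dB i"
  shows "latin_square (2 ^ lam) (xor_map :: ('n \<Rightarrow> nat) \<Rightarrow> _ \<Rightarrow> _)
         \<and> removes (2 ^ lam) (xor_map :: ('n \<Rightarrow> nat) \<Rightarrow> _ \<Rightarrow> _) dA dB"
  using latin_square_xor_map removes_xor_map[OF assms(3)] by blast

end
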